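(* Let $R$ be a finite Frobenius ring and $\mathcal{P}_{\mathrm{hom}}=P_1\mid\cdots\mid P_M$ its homogeneous weight partition. Then the left Krawtchouk coefficients $\sum_{a\in P_m}\chi(ab)$ ($b\in R$, $1\le m\le M$), and hence the left $\chi$-dual partition of $\mathcal{P}_{\mathrm{hom}}$, do not depend on the choice of the generating character $\chi$ of $R$. The same holds for the right Krawtchouk coefficients $\sum_{a\in P_m}\chi(ba)$ and the right $\chi$-dual partition.
   Context: A character of $R$ is a group homomorphism $(R,+)\to\mathbb{C}^*$; the character group $\widehat{R}$ is an $R$-$R$-bimodule via $(r\cdot\chi)(v)=\chi(vr)$ and $(\chi\cdot r)(v)=\chi(rv)$. $R$ is Frobenius iff there is a character $\chi$ with $\widehat{R}=R\cdot\chi$ (equivalently $\widehat{R}=\chi\cdot R$); such $\chi$ is called a generating character. $\mathcal{P}_{\mathrm{hom}}$ is the partition of $R$ into level sets of the normalized homogeneous weight $\omega$ (the unique map $R\to\mathbb{R}$ with $\omega(0)=0$, $\omega(x)=\omega(y)$ whenever $Rx=Ry$, and $\sum_{y\in Rx}\omega(y)=|Rx|$ for $x\ne0$). For a partition $\mathcal{P}=P_1\mid\cdots\mid P_M$ of $R$, the left $\chi$-dual partition is defined by: $b\sim b'$ iff $\sum_{a\in P_m}\chi(ab)=\sum_{a\in P_m}\chi(ab')$ for all $m$; the right $\chi$-dual partition by: $b\sim b'$ iff $\sum_{a\in P_m}\chi(ba)=\sum_{a\in P_m}\chi(b'a)$ for all $m$. *)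

theory Defs
  imports Complex_Main
begin

definition character :: "('a::ring_1 \<Rightarrow> complex) \<Rightarrow> bool" where
  "character \<chi> \<longleftrightarrow> (\<forall>x y. \<chi> (x + y) = \<chi> x * \<chi> y) \<and> (\<forall>x. \<chi> x \<noteq> 0)"

text \<open>Left action (r . chi)(v) = chi(v r); generating: every character is r . chi.\<close>
definition generating_character :: "('a::ring_1 \<Rightarrow> complex) \<Rightarrow> bool" where
  "generating_character \<chi> \<longleftrightarrow> character \<chi> \<and>
     (\<forall>\<psi>. character \<psi> \<longrightarrow> (\<exists>r. \<psi> = (\<lambda>v. \<chi> (v * r))))"

definition frobenius_ring :: "'a::{ring_1,finite} itself \<Rightarrow> bool" where
  "frobenius_ring _ \<longleftrightarrow> (\<exists>\<chi>::'a \<Rightarrow> complex. generating_character \<chi>)"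

definition left_principal :: "'a::ring_1 \<Rightarrow> 'a set" where
  "left_principal x = {r * x | r. True}"

definition is_hom_weight :: "('a::{ring_1,finite} \<Rightarrow> real) \<Rightarrow> bool" where
  "is_hom_weight \<omega> \<longleftrightarrow> \<omega> 0 = 0 \<and>
     (\<forall>x y. left_principal x = left_principal y \<longrightarrow> \<omega> x = \<omega> y) \<and>
     (\<forall>x. x \<noteq> 0 \<longrightarrow> (\<Sum>y\<in>left_principal x. \<omega> y) = real (card (left_principal x)))"

definition hom_weight :: "'a::{ring_1,finite} \<Rightarrow> real" where
  "hom_weight = (THE \<omega>. is_hom_weight \<omega>)"

definition level_partition :: "('a \<Rightarrow> real) \<Rightarrow> 'a set set" where
  "level_partition \<omega> = {{x. \<omega> x = c} | c. c \<in> range \<omega>}"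

abbreviation hom_partition :: "'a::{ring_1,finite} set set" where
  "hom_partition \<equiv> level_partition hom_weight"

definition left_dual_partition :: "('a::ring_1 \<Rightarrow> complex) \<Rightarrow> 'a set set \<Rightarrow> 'a set set" where
  "left_dual_partition \<chi> Ps =
     {{b'. \<forall>P\<in>Ps. (\<Sum>a\<in>P. \<chi> (a * b)) = (\<Sum>a\<in>P. \<chi> (a * b'))} | b. True}"

definition right_dual_partition :: "('a::ring_1 \<Rightarrow> complex) \<Rightarrow> 'a set set \<Rightarrow> 'a set set" where
  "right_dual_partition \<chi> Ps =
     {{b'. \<forall>P\<in>Ps. (\<Sum>a\<in>P. \<chi> (b * a)) = (\<Sum>a\<in>P. \<chi> (b' * a))} | b. True}"

end

theory Submission
  imports Defs
begin

text \<open>Two generating characters of a finite Frobenius ring differ by a unit on either side: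
  \<open>\<chi>' = \<chi> (u \<cdot>) = \<chi> (\<cdot> r)\<close>. This rests on the duality of the finite abelian group \<open>(R,+)\<close>
  (characters separate points, proved by extending characters along cyclic extensions of
  subgroups), which makes \<open>q \<mapsto> \<chi> (q \<cdot>)\<close> injective and then, by counting, both maps
  from \<open>R\<close> to the character group bijective. The homogeneous weight, characterised uniquely by a recursion over
  the lattice of principal left ideals, is invariant under multiplication by units on either
  side, so units permute each block \<open>P\<^sub>m\<close> of the weight partition, and reindexing the
  Krawtchouk sums by such a permutation turns \<open>\<chi>'\<close> into \<open>\<chi>\<close>.\<close>

section \<open>Characters of a finite ring separate points\<close>

definition additive_subgroup :: "'a::ring_1 set \<Rightarrow> bool" where
  "additive_subgroup H \<longleftrightarrow> 0 \<in> H \<and> (\<forall>x\<in>H. \<forall>y\<in>H. x + y \<in> H) \<and> (\<forall>x\<in>H. - x \<in> H)"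

definition character_on :: "'a::ring_1 set \<Rightarrow> ('a \<Rightarrow> complex) \<Rightarrow> bool" where
  "character_on H \<psi> \<longleftrightarrow> (\<forall>x\<in>H. \<forall>y\<in>H. \<psi> (x + y) = \<psi> x * \<psi> y) \<and> (\<forall>x\<in>H. \<psi> x \<noteq> 0)"

lemma additive_subgroup_diff:
  "additive_subgroup H \<Longrightarrow> x \<in> H \<Longrightarrow> y \<in> H \<Longrightarrow> x - y \<in> H"
  unfolding additive_subgroup_def by (metis diff_conv_add_uminus)

lemma additive_subgroup_of_int_mult:
  assumes "additive_subgroup H" "x \<in> H"
  shows "of_int k * x \<in> H"
proof (induction k rule: int_induct[where k = 0])
  case base
  show ?case using assms(1) by (simp add: additive_subgroup_def)
next
  case (step1 i)
  then show ?case using assms by (simp add: additive_subgroup_def distrib_right)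
next
  case (step2 i)
  then show ?case using assms additive_subgroup_diff by (simp add: left_diff_distrib)
qed

lemma character_on_zero: "additive_subgroup H \<Longrightarrow> character_on H \<psi> \<Longrightarrow> \<psi> 0 = 1"
  unfolding additive_subgroup_def character_on_def by (metis add_0 mult_cancel_right2)

lemma character_on_of_int_mult:
  assumes H: "additive_subgroup H" and \<psi>: "character_on H \<psi>" and x: "x \<in> H"
  shows "\<psi> (of_int k * x) = \<psi> x powi k"
proof (induction k rule: int_induct[where k = 0])
  case base
  show ?case using character_on_zero[OF H \<psi>] by simp
next
  case (step1 i)
  have "\<psi> (of_int (i + 1) * x) = \<psi> (of_int i * x) * \<psi> x"
    using \<psi> x additive_subgroup_of_int_mult[OF H x] by (simp add: character_on_def distrib_right)
  then show ?case using step1 \<psi> x by (simp add: character_on_def power_int_add)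
next
  case (step2 i)
  have "of_int i * x = of_int (i - 1) * x + x" by (simp add: left_diff_distrib)
  moreover have "\<psi> (of_int (i - 1) * x + x) = \<psi> (of_int (i - 1) * x) * \<psi> x"
    using \<psi> x additive_subgroup_of_int_mult[OF H x] unfolding character_on_def by blast
  ultimately have "\<psi> (of_int i * x) = \<psi> (of_int (i - 1) * x) * \<psi> x" by simp
  then show ?case using step2 \<psi> x by (simp add: character_on_def power_int_diff)
qed

lemma ex_complex_nth_root: "n > 0 \<Longrightarrow> \<exists>w::complex. w ^ n = c"
proof -
  assume n: "n > 0"
  have "rcis (root n (cmod c)) (Arg c / n) ^ n = rcis (root n (cmod c) ^ n) (n * (Arg c / n))"
    by (rule DeMoivre2)
  also have "\<dots> = c" using n by (simp add: real_root_pow_pos2 rcis_cmod_Arg)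
  finally show ?thesis by blast
qed

lemma ex_order_mod_additive_subgroup:
  fixes g :: "'a::{ring_1,finite}"
  assumes H: "additive_subgroup H"
  shows "\<exists>m>0. of_int m * g \<in> H \<and> (\<forall>k. of_int k * g \<in> H \<longrightarrow> m dvd k)"
proof -
  define m where "m = (LEAST n::nat. n > 0 \<and> of_nat n * g \<in> H)"
  have "CHAR('a) > 0 \<and> of_nat CHAR('a) * g \<in> H"
    using finite_imp_CHAR_pos[OF finite_UNIV] H by (simp add: additive_subgroup_def)
  then have m: "m > 0" "of_nat m * g \<in> H"
    unfolding m_def by (metis (mono_tags, lifting) LeastI)+
  have "int m dvd k" if k: "of_int k * g \<in> H" for k
  proof -
    define r where "r = k mod int m"
    have r: "0 \<le> r" "r < int m" using m(1) by (simp_all add: r_def)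
    have "of_int r * g = of_int k * g - of_int (k div int m) * (of_nat m * g)"
      by (simp add: r_def mod_div_mult_eq minus_div_mult_eq_mod[symmetric] mult.assoc[symmetric]
          left_diff_distrib)
    then have "of_nat (nat r) * g \<in> H"
      using r k additive_subgroup_diff[OF H] additive_subgroup_of_int_mult[OF H m(2)] by simp
    then have "nat r = 0"
      using r not_less_Least[of "nat r" "\<lambda>n. n > 0 \<and> of_nat n * g \<in> H", folded m_def] by linarith
    then show ?thesis using r by (simp add: r_def dvd_eq_mod_eq_0)
  qed
  then show ?thesis using m by (intro exI[of _ "int m"]) simp
qed

definition add_multiples :: "'a::ring_1 set \<Rightarrow> 'a \<Rightarrow> 'a set" where
  "add_multiples H g = {h + of_int k * g | h k. h \<in> H}"

lemma subset_add_multiples: "H \<subseteq> add_multiples H g"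
proof
  fix x assume "x \<in> H"
  moreover have "x = x + of_int 0 * g" by simp
  ultimately show "x \<in> add_multiples H g" unfolding add_multiples_def by blast
qed

lemma mem_add_multiples_generator: "0 \<in> H \<Longrightarrow> g \<in> add_multiples H g"
proof -
  assume "0 \<in> H"
  moreover have "g = 0 + of_int 1 * g" by simp
  ultimately show ?thesis unfolding add_multiples_def by blast
qed

lemma additive_subgroup_add_multiples:
  assumes H: "additive_subgroup H"
  shows "additive_subgroup (add_multiples H g)"
  unfolding additive_subgroup_def add_multiples_def
proof (intro conjI ballI)
  show "0 \<in> {h + of_int k * g | h k. h \<in> H}"
    using H by (auto simp: additive_subgroup_def intro!: exI[of _ 0])
next
  fix x y assume "x \<in> {h + of_int k * g | h k. h \<in> H}" "y \<in> {h + of_int k * g | h k. h \<in> H}"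
  then obtain h1 k1 h2 k2 where "h1 \<in> H" "h2 \<in> H" "x = h1 + of_int k1 * g" "y = h2 + of_int k2 * g"
    by blast
  then have "x + y = (h1 + h2) + of_int (k1 + k2) * g" "h1 + h2 \<in> H"
    using H by (auto simp: additive_subgroup_def algebra_simps)
  then show "x + y \<in> {h + of_int k * g | h k. h \<in> H}" by blast
next
  fix x assume "x \<in> {h + of_int k * g | h k. h \<in> H}"
  then obtain h k where "h \<in> H" "x = h + of_int k * g" by blast
  then have "- x = - h + of_int (- k) * g" "- h \<in> H"
    using H by (auto simp: additive_subgroup_def)
  then show "- x \<in> {h + of_int k * g | h k. h \<in> H}" by blast
qed

lemma character_on_add_multiples_well_defined:
  assumes H: "additive_subgroup H" and \<psi>: "character_on H \<psi>"
    and m: "of_int m * g \<in> H" "\<And>k. of_int k * g \<in> H \<Longrightarrow> m dvd k"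
    and w: "w \<noteq> 0" "w powi m = \<psi> (of_int m * g)"
    and h: "h \<in> H" "h' \<in> H" and eq: "h + of_int k * g = h' + of_int k' * g"
  shows "\<psi> h * w powi k = \<psi> h' * w powi k'"
proof -
  have diff: "of_int (k - k') * g = h' - h"
    using eq by (simp add: left_diff_distrib algebra_simps)
  then obtain j where j: "k - k' = m * j"
    using m(2) additive_subgroup_diff[OF H h(2,1)] by (metis dvdE)
  have "h' = h + of_int j * (of_int m * g)"
    using diff j by (simp add: algebra_simps)
  then have "\<psi> h' = \<psi> h * \<psi> (of_int m * g) powi j"
    using \<psi> h(1) additive_subgroup_of_int_mult[OF H m(1)] character_on_of_int_mult[OF H \<psi> m(1)]
    by (simp add: character_on_def)
  also have "\<dots> = \<psi> h * w powi (k - k')" using w(2) j by (simp add: power_int_mult)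
  finally show ?thesis using w(1) by (simp add: power_int_diff)
qed

lemma character_on_extend_step:
  assumes H: "additive_subgroup H" and \<psi>: "character_on H \<psi>"
    and m: "m > 0" "of_int m * g \<in> H" "\<And>k. of_int k * g \<in> H \<Longrightarrow> m dvd k"
    and w: "w ^ nat m = \<psi> (of_int m * g)"
  shows "\<exists>\<psi>'. character_on (add_multiples H g) \<psi>' \<and> (\<forall>x\<in>H. \<psi>' x = \<psi> x) \<and> \<psi>' g = w"
proof -
  have \<psi>_nz: "\<psi> x \<noteq> 0" if "x \<in> H" for x using \<psi> that by (simp add: character_on_def)
  have wm: "w powi m = \<psi> (of_int m * g)"
    using w m(1) by (metis order_less_le power_int_of_nat zero_le_imp_eq_int nat_int)
  have w_nz: "w \<noteq> 0" using wm \<psi>_nz[OF m(2)] m(1) by auto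
  note well_defined = character_on_add_multiples_well_defined[OF H \<psi> m(2,3) w_nz wm]
  define \<psi>' where "\<psi>' x = (SOME c. \<exists>h\<in>H. \<exists>k. x = h + of_int k * g \<and> c = \<psi> h * w powi k)" for x
  have \<psi>': "\<psi>' (h + of_int k * g) = \<psi> h * w powi k" if "h \<in> H" for h k
    unfolding \<psi>'_def
  proof (rule someI2)
    show "\<exists>h'\<in>H. \<exists>k'. h + of_int k * g = h' + of_int k' * g \<and> \<psi> h * w powi k = \<psi> h' * w powi k'"
      using that by blast
  qed (use that well_defined in metis)
  have "character_on (add_multiples H g) \<psi>'"
    unfolding character_on_def add_multiples_def
  proof (intro conjI ballI)
    fix x y assume "x \<in> {h + of_int k * g | h k. h \<in> H}" "y \<in> {h + of_int k * g | h k. h \<in> H}"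
    then obtain h1 k1 h2 k2 where hk: "h1 \<in> H" "h2 \<in> H" "x = h1 + of_int k1 * g" "y = h2 + of_int k2 * g"
      by blast
    have "x + y = (h1 + h2) + of_int (k1 + k2) * g" "h1 + h2 \<in> H"
      using H hk by (auto simp: additive_subgroup_def algebra_simps)
    then have "\<psi>' (x + y) = \<psi> (h1 + h2) * w powi (k1 + k2)" using \<psi>' by presburger
    then show "\<psi>' (x + y) = \<psi>' x * \<psi>' y"
      using \<psi> hk w_nz \<psi>' by (simp add: character_on_def power_int_add)
  next
    fix x assume "x \<in> {h + of_int k * g | h k. h \<in> H}"
    then show "\<psi>' x \<noteq> 0" using \<psi>' \<psi>_nz w_nz by auto
  qed
  moreover have "\<forall>x\<in>H. \<psi>' x = \<psi> x" using \<psi>'[of _ 0] by simp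
  moreover have "\<psi>' g = w"
    using \<psi>'[of 0 1] H character_on_zero[OF H \<psi>] by (simp add: additive_subgroup_def)
  ultimately show ?thesis by blast
qed

lemma character_on_extend:
  fixes H :: "'a::{ring_1,finite} set"
  assumes "additive_subgroup H" "character_on H \<psi>"
  shows "\<exists>\<phi>. character \<phi> \<and> (\<forall>x\<in>H. \<phi> x = \<psi> x)"
  using assms
proof (induction "card (- H)" arbitrary: H \<psi> rule: less_induct)
  case less
  show ?case
  proof (cases "H = UNIV")
    case True
    then show ?thesis using less.prems by (auto simp: character_def character_on_def)
  next
    case False
    then obtain g where g: "g \<notin> H" by auto
    obtain m where m: "m > 0" "of_int m * g \<in> H" "\<And>k. of_int k * g \<in> H \<Longrightarrow> m dvd k"
      using ex_order_mod_additive_subgroup[OF less.prems(1)] by blast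
    obtain w where "w ^ nat m = \<psi> (of_int m * g)"
      using ex_complex_nth_root[of "nat m"] m(1) by auto
    then obtain \<psi>' where \<psi>': "character_on (add_multiples H g) \<psi>'" "\<forall>x\<in>H. \<psi>' x = \<psi> x"
      using character_on_extend_step[OF less.prems m] by blast
    have "0 \<in> H" using less.prems(1) by (simp add: additive_subgroup_def)
    then have "g \<in> add_multiples H g" by (rule mem_add_multiples_generator)
    then have "- add_multiples H g \<subset> - H" using g subset_add_multiples[of H g] by blast
    then have "card (- add_multiples H g) < card (- H)" by (simp add: psubset_card_mono)
    then obtain \<phi> where "character \<phi>" "\<forall>x\<in>add_multiples H g. \<phi> x = \<psi>' x"
      using less.hyps additive_subgroup_add_multiples[OF less.prems(1)] \<psi>'(1) by blast
    moreover have "\<forall>x\<in>H. \<phi> x = \<psi> x" using calculation \<psi>'(2) subset_add_multiples[of H g] by auto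
    ultimately show ?thesis by blast
  qed
qed

lemma ex_character_ne_1:
  fixes t :: "'a::{ring_1,finite}"
  assumes "t \<noteq> 0"
  shows "\<exists>\<phi>. character \<phi> \<and> \<phi> t \<noteq> 1"
proof -
  have H: "additive_subgroup {0::'a}" by (simp add: additive_subgroup_def)
  have \<psi>: "character_on {0::'a} (\<lambda>_. 1)" by (simp add: character_on_def)
  obtain m where m: "m > 0" "of_int m * t \<in> {0}" "\<And>k. of_int k * t \<in> {0} \<Longrightarrow> m dvd k"
    using ex_order_mod_additive_subgroup[OF H] by blast
  have "m \<noteq> 1" using m(2) assms by auto
  then have "card {z::complex. z ^ nat m = 1} \<noteq> 1" using m(1) by (simp add: card_roots_unity_eq)
  then have "{z::complex. z ^ nat m = 1} \<noteq> {1}" by auto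
  then obtain w :: complex where w: "w ^ nat m = 1" "w \<noteq> 1" by auto
  then obtain \<psi>' where \<psi>': "character_on (add_multiples {0} t) \<psi>'" "\<psi>' t = w"
    using character_on_extend_step[OF H \<psi> m] by auto
  obtain \<phi> where \<phi>: "character \<phi>" "\<forall>x\<in>add_multiples {0} t. \<phi> x = \<psi>' x"
    using character_on_extend[OF additive_subgroup_add_multiples[OF H] \<psi>'(1)] by blast
  then have "\<phi> t \<noteq> 1" using mem_add_multiples_generator[of "{0}" t] \<psi>'(2) w(2) by simp
  then show ?thesis using \<phi>(1) by blast
qed

section \<open>Generating characters differ by units\<close>

lemma character_diff: "character \<chi> \<Longrightarrow> \<chi> (a - b) = \<chi> a / \<chi> b"
  unfolding character_def by (metis diff_add_cancel nonzero_eq_divide_eq)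

lemma character_mult_right: "character \<chi> \<Longrightarrow> character (\<lambda>v. \<chi> (v * q))"
  by (simp add: character_def distrib_right)

lemma character_mult_left: "character \<chi> \<Longrightarrow> character (\<lambda>v. \<chi> (q * v))"
  by (simp add: character_def distrib_left)

lemma generating_character_inj_mult_left:
  fixes \<chi> :: "'a::{ring_1,finite} \<Rightarrow> complex"
  assumes \<chi>: "generating_character \<chi>"
  shows "inj (\<lambda>q v. \<chi> (q * v))"
proof (rule injI)
  fix q q' assume eq: "(\<lambda>v. \<chi> (q * v)) = (\<lambda>v. \<chi> (q' * v))"
  have c: "character \<chi>" using \<chi> by (simp add: generating_character_def)
  have "\<phi> (q - q') = 1" if \<phi>: "character \<phi>" for \<phi>
  proof -
    obtain p where "\<phi> = (\<lambda>v. \<chi> (v * p))" using \<chi> \<phi> by (auto simp: generating_character_def)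
    then have "\<phi> (q - q') = \<chi> (q * p) / \<chi> (q' * p)"
      using character_diff[OF c] by (simp add: left_diff_distrib)
    also have "\<dots> = 1" using eq c by (metis character_def divide_self)
    finally show ?thesis .
  qed
  then show "q = q'" using ex_character_ne_1[of "q - q'"] by auto
qed

text \<open>Counting: the injective left map and the surjective right map squeeze the number of
  characters to \<open>|R|\<close>.\<close>
lemma generating_character_bij:
  fixes \<chi> :: "'a::{ring_1,finite} \<Rightarrow> complex"
  assumes \<chi>: "generating_character \<chi>"
  shows "inj (\<lambda>r v. \<chi> (v * r))" and "range (\<lambda>q v. \<chi> (q * v)) = {\<psi>. character \<psi>}"
proof -
  have c: "character \<chi>" using \<chi> by (simp add: generating_character_def)
  have right: "range (\<lambda>r v. \<chi> (v * r)) = {\<psi>. character \<psi>}"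
    using \<chi> character_mult_right[OF c] by (auto simp: generating_character_def)
  have left: "range (\<lambda>q v. \<chi> (q * v)) \<subseteq> {\<psi>. character \<psi>}"
    using character_mult_left[OF c] by auto
  have fin: "finite {\<psi>::'a \<Rightarrow> complex. character \<psi>}" unfolding right[symmetric] by simp
  have "card (UNIV :: 'a set) = card (range (\<lambda>q v. \<chi> (q * v)))"
    using card_image[OF generating_character_inj_mult_left[OF \<chi>]] by simp
  also have "\<dots> \<le> card {\<psi>::'a \<Rightarrow> complex. character \<psi>}" using card_mono[OF fin left] .
  finally have "card (UNIV :: 'a set) \<le> card (range (\<lambda>r v. \<chi> (v * r)))" using right by simp
  then have card_eq: "card (range (\<lambda>r v. \<chi> (v * r))) = card (UNIV :: 'a set)"
    using card_image_le[of UNIV "\<lambda>r v. \<chi> (v * r)"] by simp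
  then show "inj (\<lambda>r v. \<chi> (v * r))" by (simp add: eq_card_imp_inj_on)
  show "range (\<lambda>q v. \<chi> (q * v)) = {\<psi>. character \<psi>}"
    using card_eq card_image[OF generating_character_inj_mult_left[OF \<chi>]] right
    by (intro card_subset_eq[OF fin left]) simp
qed

lemma generating_character_eq_mult_left_unit:
  fixes \<chi> \<chi>' :: "'a::{ring_1,finite} \<Rightarrow> complex"
  assumes \<chi>: "generating_character \<chi>" and \<chi>': "generating_character \<chi>'"
  shows "\<exists>u v. u * v = 1 \<and> v * u = 1 \<and> \<chi>' = (\<lambda>x. \<chi> (u * x))"
proof -
  obtain u where u: "\<chi>' = (\<lambda>x. \<chi> (u * x))"
    using generating_character_bij(2)[OF \<chi>] \<chi>' by (auto simp: generating_character_def)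
  obtain v where v: "\<chi> = (\<lambda>x. \<chi>' (v * x))"
    using generating_character_bij(2)[OF \<chi>'] \<chi> by (auto simp: generating_character_def)
  have "(\<lambda>x. \<chi> ((u * v) * x)) = (\<lambda>x. \<chi> (1 * x))" by (metis u v mult.assoc mult_1_left)
  from injD[OF generating_character_inj_mult_left[OF \<chi>] this] have "u * v = 1" .
  moreover have "(\<lambda>x. \<chi>' ((v * u) * x)) = (\<lambda>x. \<chi>' (1 * x))" by (metis u v mult.assoc mult_1_left)
  from injD[OF generating_character_inj_mult_left[OF \<chi>'] this] have "v * u = 1" .
  ultimately show ?thesis using u by blast
qed

lemma generating_character_eq_mult_right_unit:
  fixes \<chi> \<chi>' :: "'a::{ring_1,finite} \<Rightarrow> complex"
  assumes \<chi>: "generating_character \<chi>" and \<chi>': "generating_character \<chi>'"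
  shows "\<exists>r s. r * s = 1 \<and> s * r = 1 \<and> \<chi>' = (\<lambda>x. \<chi> (x * r))"
proof -
  obtain r where r: "\<chi>' = (\<lambda>x. \<chi> (x * r))"
    using \<chi> \<chi>' by (auto simp: generating_character_def)
  obtain s where s: "\<chi> = (\<lambda>x. \<chi>' (x * s))"
    using \<chi> \<chi>' by (auto simp: generating_character_def)
  have "(\<lambda>x. \<chi>' (x * (r * s))) = (\<lambda>x. \<chi>' (x * 1))" by (metis r s mult.assoc mult_1_right)
  from injD[OF generating_character_bij(1)[OF \<chi>'] this] have "r * s = 1" .
  moreover have "(\<lambda>x. \<chi> (x * (s * r))) = (\<lambda>x. \<chi> (x * 1))" by (metis r s mult.assoc mult_1_right)
  from injD[OF generating_character_bij(1)[OF \<chi>] this] have "s * r = 1" .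
  ultimately show ?thesis using r by blast
qed

section \<open>The homogeneous weight\<close>

lemma is_hom_weight_zero: "is_hom_weight \<omega> \<Longrightarrow> \<omega> 0 = 0"
  unfolding is_hom_weight_def by blast

lemma is_hom_weight_cong:
  "is_hom_weight \<omega> \<Longrightarrow> left_principal x = left_principal y \<Longrightarrow> \<omega> x = \<omega> y"
  unfolding is_hom_weight_def by blast

lemma is_hom_weight_sum:
  "is_hom_weight \<omega> \<Longrightarrow> x \<noteq> 0 \<Longrightarrow> (\<Sum>y\<in>left_principal x. \<omega> y) = real (card (left_principal x))"
  unfolding is_hom_weight_def by blast

definition left_generators :: "'a::ring_1 \<Rightarrow> 'a set" where
  "left_generators x = {y. left_principal y = left_principal x}"

lemma left_principal_mem_self: "x \<in> left_principal x"
  unfolding left_principal_def by (metis (mono_tags) CollectI mult_1)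

lemma left_principal_subset: "y \<in> left_principal x \<Longrightarrow> left_principal y \<subseteq> left_principal x"
  unfolding left_principal_def by (auto simp: mult.assoc[symmetric])

lemma left_principal_eq_zero_iff: "left_principal x = {0} \<longleftrightarrow> x = 0"
  using left_principal_mem_self[of x] by (auto simp: left_principal_def)

lemma left_generators_subset: "left_generators x \<subseteq> left_principal x"
  unfolding left_generators_def using left_principal_mem_self by blast

lemma card_left_generators_pos: "card (left_generators (x::'a::{ring_1,finite})) > 0"
  using left_principal_mem_self[of x] by (auto simp: left_generators_def card_gt_0_iff)

lemma card_left_principal_less:
  fixes x y :: "'a::{ring_1,finite}"
  assumes "y \<in> left_principal x - left_generators x"
  shows "card (left_principal y) < card (left_principal x)"
  using assms left_principal_subset[of y x]
  by (intro psubset_card_mono) (auto simp: left_generators_def)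

lemma sum_left_principal_split:
  fixes \<omega> :: "'a::{ring_1,finite} \<Rightarrow> real"
  assumes "\<And>y. y \<in> left_generators x \<Longrightarrow> \<omega> y = \<omega> x"
  shows "(\<Sum>y\<in>left_principal x. \<omega> y) =
           real (card (left_generators x)) * \<omega> x + (\<Sum>y\<in>left_principal x - left_generators x. \<omega> y)"
proof -
  have "(\<Sum>y\<in>left_generators x. \<omega> y) = (\<Sum>y\<in>left_generators x. \<omega> x)"
    using assms by (rule sum.cong[OF refl])
  then show ?thesis using sum.subset_diff[OF left_generators_subset[of x] finite, of \<omega>] by simp
qed

text \<open>On a nonzero \<open>x\<close> the defining sum condition determines \<open>\<omega> x\<close> from the values on the
  strictly smaller ideals \<open>R y \<subset> R x\<close>.\<close>
function recursive_hom_weight :: "'a::{ring_1,finite} \<Rightarrow> real" where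
  "recursive_hom_weight x =
     (if x = 0 then 0
      else (real (card (left_principal x))
              - (\<Sum>y\<in>left_principal x - left_generators x. recursive_hom_weight y))
           / real (card (left_generators x)))"
  by auto
termination
  by (relation "measure (\<lambda>x. card (left_principal x))") (auto intro: card_left_principal_less)

declare recursive_hom_weight.simps [simp del]

lemma is_hom_weight_recursive_hom_weight: "is_hom_weight recursive_hom_weight"
  unfolding is_hom_weight_def
proof (intro conjI allI impI)
  show "recursive_hom_weight 0 = 0" by (simp add: recursive_hom_weight.simps)
next
  fix x y :: 'a assume "left_principal x = left_principal y"
  moreover from this have "x = 0 \<longleftrightarrow> y = 0" by (metis left_principal_eq_zero_iff)
  ultimately show "recursive_hom_weight x = recursive_hom_weight y"
    by (simp add: recursive_hom_weight.simps[of x] recursive_hom_weight.simps[of y] left_generators_def)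
next
  fix x :: 'a assume "x \<noteq> 0"
  have "recursive_hom_weight y = recursive_hom_weight x" if "y \<in> left_generators x" for y
  proof -
    have "y \<noteq> 0"
      using that \<open>x \<noteq> 0\<close> left_principal_eq_zero_iff[of x] left_principal_eq_zero_iff[of y]
      by (auto simp: left_generators_def)
    then show ?thesis using that \<open>x \<noteq> 0\<close>
      by (simp add: recursive_hom_weight.simps[of x] recursive_hom_weight.simps[of y] left_generators_def)
  qed
  then have "(\<Sum>y\<in>left_principal x. recursive_hom_weight y) =
      real (card (left_generators x)) * recursive_hom_weight x
      + (\<Sum>y\<in>left_principal x - left_generators x. recursive_hom_weight y)"
    by (rule sum_left_principal_split)
  also have "\<dots> = real (card (left_principal x))"
    using card_left_generators_pos[of x] \<open>x \<noteq> 0\<close> by (simp add: recursive_hom_weight.simps[of x] card_gt_0_iff)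
  finally show "(\<Sum>y\<in>left_principal x. recursive_hom_weight y) = real (card (left_principal x))" .
qed

lemma is_hom_weight_split:
  fixes \<omega> :: "'a::{ring_1,finite} \<Rightarrow> real"
  assumes \<omega>: "is_hom_weight \<omega>" and "x \<noteq> 0"
  shows "real (card (left_generators x)) * \<omega> x + (\<Sum>y\<in>left_principal x - left_generators x. \<omega> y) =
           real (card (left_principal x))"
proof -
  have "\<omega> y = \<omega> x" if "y \<in> left_generators x" for y
    using is_hom_weight_cong[OF \<omega>] that unfolding left_generators_def by blast
  then have "(\<Sum>y\<in>left_principal x. \<omega> y) =
      real (card (left_generators x)) * \<omega> x + (\<Sum>y\<in>left_principal x - left_generators x. \<omega> y)"
    by (rule sum_left_principal_split)
  then show ?thesis using is_hom_weight_sum[OF \<omega> \<open>x \<noteq> 0\<close>] by linarith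
qed

lemma is_hom_weight_unique:
  fixes \<omega> \<omega>' :: "'a::{ring_1,finite} \<Rightarrow> real"
  assumes \<omega>: "is_hom_weight \<omega>" and \<omega>': "is_hom_weight \<omega>'"
  shows "\<omega> = \<omega>'"
proof
  fix x
  show "\<omega> x = \<omega>' x"
  proof (induction "card (left_principal x)" arbitrary: x rule: less_induct)
    case less
    show ?case
    proof (cases "x = 0")
      case True
      then show ?thesis using is_hom_weight_zero[OF \<omega>] is_hom_weight_zero[OF \<omega>'] by simp
    next
      case False
      have "(\<Sum>y\<in>left_principal x - left_generators x. \<omega> y) = (\<Sum>y\<in>left_principal x - left_generators x. \<omega>' y)"
        using less card_left_principal_less by (intro sum.cong) auto
      then have "real (card (left_generators x)) * \<omega> x = real (card (left_generators x)) * \<omega>' x"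
        using is_hom_weight_split[OF \<omega> False] is_hom_weight_split[OF \<omega>' False] by linarith
      then show ?thesis using card_left_generators_pos[of x] by (simp add: card_gt_0_iff)
    qed
  qed
qed

lemma is_hom_weight_hom_weight: "is_hom_weight hom_weight"
  unfolding hom_weight_def
  using is_hom_weight_recursive_hom_weight
  by (rule theI[where P = is_hom_weight]) (rule is_hom_weight_unique[OF _ is_hom_weight_recursive_hom_weight])

section \<open>Invariance of the homogeneous weight partition under units\<close>

lemma left_principal_mult_left_unit: "v * u = 1 \<Longrightarrow> left_principal (u * x) = left_principal x"
  unfolding left_principal_def by (metis mult.assoc mult_1)

lemma left_principal_mult_right: "left_principal (x * u) = (\<lambda>y. y * u) ` left_principal x"
  unfolding left_principal_def image_def by (auto simp flip: mult.assoc)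

lemma hom_weight_mult_left_unit: "v * u = 1 \<Longrightarrow> hom_weight (u * x) = hom_weight x"
  using is_hom_weight_cong[OF is_hom_weight_hom_weight] left_principal_mult_left_unit by metis

lemma hom_weight_mult_right_unit:
  fixes u v :: "'a::{ring_1,finite}"
  assumes uv: "u * v = 1"
  shows "hom_weight (x * u) = hom_weight x"
proof -
  have inj: "inj (\<lambda>y. y * u)" by (rule inj_on_inverseI[where g = "\<lambda>y. y * v"]) (simp add: uv mult.assoc)
  have "is_hom_weight (\<lambda>x. hom_weight (x * u))"
    unfolding is_hom_weight_def
  proof (intro conjI allI impI)
    show "hom_weight (0 * u) = 0" using is_hom_weight_zero[OF is_hom_weight_hom_weight] by simp
  next
    fix x y :: 'a assume "left_principal x = left_principal y"
    then have "left_principal (x * u) = left_principal (y * u)" by (simp add: left_principal_mult_right)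
    then show "hom_weight (x * u) = hom_weight (y * u)" by (rule is_hom_weight_cong[OF is_hom_weight_hom_weight])
  next
    fix x :: 'a assume "x \<noteq> 0"
    then have "x * u \<noteq> 0" using uv by (metis mult.assoc mult_1_right mult_zero_left)
    have "(\<Sum>y\<in>left_principal x. hom_weight (y * u)) = (\<Sum>z\<in>left_principal (x * u). hom_weight z)"
      unfolding left_principal_mult_right by (simp add: sum.reindex[OF inj_on_subset[OF inj]])
    also have "\<dots> = real (card (left_principal (x * u)))"
      using is_hom_weight_sum[OF is_hom_weight_hom_weight \<open>x * u \<noteq> 0\<close>] .
    also have "card (left_principal (x * u)) = card (left_principal x)"
      unfolding left_principal_mult_right by (simp add: card_image[OF inj_on_subset[OF inj]])
    finally show "(\<Sum>y\<in>left_principal x. hom_weight (y * u)) = real (card (left_principal x))" .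
  qed
  then show ?thesis using is_hom_weight_unique is_hom_weight_hom_weight by metis
qed

lemma bij_mult_left_unit:
  fixes u v :: "'a::monoid_mult"
  assumes "u * v = 1" "v * u = 1"
  shows "bij (\<lambda>x. u * x)"
proof (rule o_bij[where g = "\<lambda>x. v * x"])
  show "(\<lambda>x. v * x) \<circ> (\<lambda>x. u * x) = id" using assms(2) by (simp add: fun_eq_iff flip: mult.assoc)
  show "(\<lambda>x. u * x) \<circ> (\<lambda>x. v * x) = id" using assms(1) by (simp add: fun_eq_iff flip: mult.assoc)
qed

lemma bij_mult_right_unit:
  fixes u v :: "'a::monoid_mult"
  assumes "u * v = 1" "v * u = 1"
  shows "bij (\<lambda>x. x * u)"
proof (rule o_bij[where g = "\<lambda>x. x * v"])
  show "(\<lambda>x. x * v) \<circ> (\<lambda>x. x * u) = id" using assms(1) by (simp add: fun_eq_iff mult.assoc)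
  show "(\<lambda>x. x * u) \<circ> (\<lambda>x. x * v) = id" using assms(2) by (simp add: fun_eq_iff mult.assoc)
qed

lemma sum_level_set_reindex:
  assumes f: "bij f" and \<omega>: "\<And>x. \<omega> (f x) = \<omega> x" and P: "P \<in> level_partition \<omega>"
  shows "(\<Sum>a\<in>P. g (f a)) = (\<Sum>a\<in>P. g a)"
proof -
  obtain c where c: "P = {x. \<omega> x = c}" using P unfolding level_partition_def by blast
  have "f ` P = P"
  proof
    show "f ` P \<subseteq> P" using \<omega> c by auto
    show "P \<subseteq> f ` P"
    proof
      fix x assume "x \<in> P"
      moreover have "f (inv f x) = x" using f by (simp add: bij_is_surj surj_f_inv_f)
      ultimately have "inv f x \<in> P" using \<omega>[of "inv f x"] c by simp
      then show "x \<in> f ` P" using \<open>f (inv f x) = x\<close> by (metis image_eqI)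
    qed
  qed
  then show ?thesis using sum.reindex[OF inj_on_subset[OF bij_is_inj[OF f]], of P g] by simp
qed

theorem corollary5p3:
  assumes "frobenius_ring TYPE('a::{ring_1,finite})"
    and "generating_character (\<chi>::'a \<Rightarrow> complex)"
    and "generating_character (\<chi>'::'a \<Rightarrow> complex)"
  shows "(\<forall>P\<in>(hom_partition::'a set set). \<forall>b.
            (\<Sum>a\<in>P. \<chi> (a * b)) = (\<Sum>a\<in>P. \<chi>' (a * b))) \<and>
         left_dual_partition \<chi> (hom_partition::'a set set) = left_dual_partition \<chi>' hom_partition \<and>
         (\<forall>P\<in>(hom_partition::'a set set). \<forall>b.
            (\<Sum>a\<in>P. \<chi> (b * a)) = (\<Sum>a\<in>P. \<chi>' (b * a))) \<and>
         right_dual_partition \<chi> (hom_partition::'a set set) = right_dual_partition \<chi>' hom_partition"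
proof -
  obtain u v where uv: "u * v = 1" "v * u = 1" and \<chi>'_left: "\<chi>' = (\<lambda>x. \<chi> (u * x))"
    using generating_character_eq_mult_left_unit[OF assms(2,3)] by blast
  obtain r s where rs: "r * s = 1" "s * r = 1" and \<chi>'_right: "\<chi>' = (\<lambda>x. \<chi> (x * r))"
    using generating_character_eq_mult_right_unit[OF assms(2,3)] by blast
  have left: "(\<Sum>a\<in>P. \<chi> (a * b)) = (\<Sum>a\<in>P. \<chi>' (a * b))" if P: "P \<in> hom_partition" for P b
  proof -
    have "(\<Sum>a\<in>P. \<chi> ((u * a) * b)) = (\<Sum>a\<in>P. \<chi> (a * b))"
      using bij_mult_left_unit[OF uv] hom_weight_mult_left_unit[OF uv(2)] P by (rule sum_level_set_reindex)
    then show ?thesis by (simp add: \<chi>'_left mult.assoc)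
  qed
  have right: "(\<Sum>a\<in>P. \<chi> (b * a)) = (\<Sum>a\<in>P. \<chi>' (b * a))" if P: "P \<in> hom_partition" for P b
  proof -
    have "(\<Sum>a\<in>P. \<chi> (b * (a * r))) = (\<Sum>a\<in>P. \<chi> (b * a))"
      using bij_mult_right_unit[OF rs] hom_weight_mult_right_unit[OF rs(1)] P by (rule sum_level_set_reindex)
    then show ?thesis by (simp add: \<chi>'_right mult.assoc)
  qed
  show ?thesis
    using left right by (simp add: left_dual_partition_def right_dual_partition_def)
qed

end
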